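(* Let $\Omega$ be a completely regular Hausdorff space with Stone–Čech compactification $\beta\Omega$, and let $\mathcal{F}$ be a $z$-filter on $\Omega$. Let $\phi \in C(\Omega, \mathbb{C})$ (with $\phi^\beta:\beta\Omega\to\mathbb{C}\cup\{\infty\}$ its continuous extension and closures taken in $\mathbb{C}\cup\{\infty\}$), or let $\phi \in C(\Omega, X)$, $X$ a locally convex topological vector space, with $\overline{\phi(\Omega)}$ compact (with $\phi^\beta$ its Stone extension to $\beta\Omega$). Then \[ \phi^\beta\Big(\bigcap_{F \in \mathcal{F}}\mathrm{cl}_{\beta}F\Big) = \bigcap_{F \in \mathcal{F}} \phi^\beta(\mathrm{cl}_{\beta}F) = \bigcap_{F \in \mathcal{F}} \overline{\phi(F)}. \]
   Context: $\mathrm{cl}_\beta S$ denotes the closure of $S\subset\Omega$ in $\beta\Omega$. A zero-set of $\Omega$ is $h^{-1}(0)$ for some $h\in C(\Omega,\mathbb{R})$. A $z$-filter on $\Omega$ is a nonempty family $\mathcal{F}$ of zero-sets with $\emptyset\notin\mathcal{F}$, closed under finite intersections, and such that any zero-set containing a member of $\mathcal{F}$ belongs to $\mathcal{F}$. For $f$ continuous with relatively compact range, $f^\beta$ denotes the continuous (Stone) extension of $f$ to $\beta\Omega$ with $f^\beta|_\Omega=f$. *)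

theory Defs
  imports "HOL-Analysis.Analysis"
begin

definition zero_set :: "'a topology \<Rightarrow> 'a set \<Rightarrow> bool" where
  "zero_set \<Omega> Z \<longleftrightarrow>
     (\<exists>h. continuous_map \<Omega> euclideanreal h \<and> Z = {x \<in> topspace \<Omega>. h x = 0})"

definition z_filter :: "'a topology \<Rightarrow> 'a set set \<Rightarrow> bool" where
  "z_filter \<Omega> \<F> \<longleftrightarrow>
     \<F> \<noteq> {} \<and> (\<forall>Z\<in>\<F>. zero_set \<Omega> Z) \<and> {} \<notin> \<F> \<and>
     (\<forall>A\<in>\<F>. \<forall>C\<in>\<F>. A \<inter> C \<in> \<F>) \<and>
     (\<forall>A\<in>\<F>. \<forall>Z. zero_set \<Omega> Z \<and> A \<subseteq> Z \<longrightarrow> Z \<in> \<F>)"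

text \<open>(B, e) is a Stone-Cech compactification of Omega: B compact Hausdorff, e an embedding
  with dense image, and every bounded continuous real function on Omega extends continuously
  to B (Gillman-Jerison, Thm. 6.5 characterization).\<close>

definition stone_cech :: "'a topology \<Rightarrow> 'b topology \<Rightarrow> ('a \<Rightarrow> 'b) \<Rightarrow> bool" where
  "stone_cech \<Omega> B e \<longleftrightarrow>
     compact_space B \<and> Hausdorff_space B \<and> embedding_map \<Omega> B e \<and>
     B closure_of (e ` topspace \<Omega>) = topspace B \<and>
     (\<forall>f. continuous_map \<Omega> euclideanreal f \<and> bounded (f ` topspace \<Omega>) \<longrightarrow>
        (\<exists>g. continuous_map B euclideanreal g \<and> (\<forall>x\<in>topspace \<Omega>. g (e x) = f x)))"

text \<open>Riemann sphere C \<union> {\<infinity>} as the one-point compactification of C: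
  Some z is the point z, None is \<infinity>.\<close>

definition riemann_open :: "complex option set \<Rightarrow> bool" where
  "riemann_open U \<longleftrightarrow> open (Some -` U) \<and> (None \<in> U \<longrightarrow> compact (- (Some -` U)))"

lemma istopology_riemann_open: "istopology riemann_open"
  unfolding istopology_def
proof safe
  fix S T assume S: "riemann_open S" and T: "riemann_open T"
  show "riemann_open (S \<inter> T)"
    unfolding riemann_open_def
  proof safe
    show "open (Some -` (S \<inter> T))"
      using S T by (auto simp: riemann_open_def vimage_Int)
    assume "None \<in> S" "None \<in> T"
    then have "compact (- (Some -` S) \<union> - (Some -` T))"
      using S T by (auto simp: riemann_open_def intro: compact_Un)
    then show "compact (- (Some -` (S \<inter> T)))" by (simp add: vimage_Int)
  qed
next
  fix K assume K: "\<forall>S\<in>K. riemann_open S"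
  show "riemann_open (\<Union>K)"
    unfolding riemann_open_def
  proof safe
    show "open (Some -` \<Union>K)"
      using K by (auto simp: riemann_open_def vimage_Union intro!: open_Union)
    fix U assume "None \<in> U" "U \<in> K"
    then have c: "compact (- (Some -` U))" using K by (auto simp: riemann_open_def)
    have "closed (- (Some -` \<Union>K))"
      using K by (auto simp: riemann_open_def vimage_Union intro!: open_Union)
    moreover have "- (Some -` \<Union>K) \<subseteq> - (Some -` U)" using \<open>U \<in> K\<close> by auto
    ultimately show "compact (- (Some -` \<Union>K))"
      using c compact_Int_closed[of "- (Some -` U)" "- (Some -` \<Union>K)"]
      by (simp add: Int_absorb1)
  qed
qed

definition riemann_sphere :: "complex option topology" where
  "riemann_sphere = topology riemann_open"

text \<open>Hausdorff locally convex topological vector space structure on a real vector space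
  (complex spaces are in particular real vector spaces).\<close>

definition lctvs :: "'x::real_vector topology \<Rightarrow> bool" where
  "lctvs X \<longleftrightarrow>
     topspace X = UNIV \<and> Hausdorff_space X \<and>
     continuous_map (prod_topology X X) X (\<lambda>(x, y). x + y) \<and>
     continuous_map (prod_topology euclideanreal X) X (\<lambda>(c, x). c *\<^sub>R x) \<and>
     (\<forall>U. openin X U \<and> 0 \<in> U \<longrightarrow> (\<exists>V. openin X V \<and> 0 \<in> V \<and> convex V \<and> V \<subseteq> U))"

end

theory Submission
  imports Defs
begin

text \<open>The extension \<open>\<phi>\<^sup>\<beta>\<close> is a continuous map from the compact space \<open>\<beta>\<Omega>\<close> into a
  Hausdorff space, hence a closed map: this gives \<open>\<phi>\<^sup>\<beta>(cl\<^sub>\<beta> F) = cl \<phi>(F)\<close>.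
  Since a z-filter is closed under finite intersections, the sets \<open>cl\<^sub>\<beta> F\<close> form a
  down-directed family of closed sets, and for such a family a point \<open>y\<close> lying in every
  \<open>\<phi>\<^sup>\<beta>(cl\<^sub>\<beta> F)\<close> has a preimage in every \<open>cl\<^sub>\<beta> F\<close>; the closed sets
  \<open>cl\<^sub>\<beta> F \<inter> (\<phi>\<^sup>\<beta>)\<^sup>-\<^sup>1{y}\<close> then have the finite intersection property, so by compactness they
  meet.\<close>

definition down_directed :: "'i set \<Rightarrow> ('i \<Rightarrow> 'a set) \<Rightarrow> bool" where
  "down_directed I A \<longleftrightarrow> (\<forall>i\<in>I. \<forall>j\<in>I. \<exists>k\<in>I. A k \<subseteq> A i \<inter> A j)"

lemma down_directed_finite_lower_bound:
  assumes "down_directed I A" "finite G" "G \<noteq> {}" "G \<subseteq> I"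
  shows "\<exists>k\<in>I. A k \<subseteq> (\<Inter>i\<in>G. A i)"
  using assms(2-4)
proof (induction G rule: finite_ne_induct)
  case (singleton i)
  then show ?case by blast
next
  case (insert i G)
  then obtain k where "k \<in> I" "A k \<subseteq> (\<Inter>j\<in>G. A j)" by blast
  moreover obtain k' where "k' \<in> I" "A k' \<subseteq> A i \<inter> A k"
    using assms(1) insert.prems \<open>k \<in> I\<close> unfolding down_directed_def by blast
  ultimately show ?case by blast
qed

lemma down_directed_Int_const:
  "down_directed I A \<Longrightarrow> down_directed I (\<lambda>i. A i \<inter> C)"
  unfolding down_directed_def by blast

lemma compact_space_Inter_down_directed_nonempty:
  assumes "compact_space X" "I \<noteq> {}" "down_directed I A"
    and "\<And>i. i \<in> I \<Longrightarrow> closedin X (A i)" "\<And>i. i \<in> I \<Longrightarrow> A i \<noteq> {}"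
  shows "(\<Inter>i\<in>I. A i) \<noteq> {}"
proof -
  have closed: "\<forall>C\<in>A ` I. closedin X C"
    using assms(4) by blast
  have "\<Inter>\<G> \<noteq> {}" if fin: "finite \<G>" and sub: "\<G> \<subseteq> A ` I" for \<G>
  proof -
    obtain G where G: "G \<subseteq> I" "finite G" "\<G> = A ` G"
      using finite_subset_image[OF fin sub] by blast
    show ?thesis
    proof (cases "G = {}")
      case False
      then obtain k where "k \<in> I" "A k \<subseteq> \<Inter>\<G>"
        using down_directed_finite_lower_bound[OF assms(3) G(2) _ G(1)] G(3) by auto
      then show ?thesis using assms(5) by blast
    qed (use G assms(2) in auto)
  qed
  then show ?thesis
    using assms(1)[unfolded compact_space_fip, rule_format, of "A ` I"] closed by blast
qed

lemma image_Inter_down_directed_closedin: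
  assumes "compact_space X" "t1_space Y" "continuous_map X Y f" "I \<noteq> {}"
    and "down_directed I A" "\<And>i. i \<in> I \<Longrightarrow> closedin X (A i)"
  shows "f ` (\<Inter>i\<in>I. A i) = (\<Inter>i\<in>I. f ` A i)"
proof
  show "(\<Inter>i\<in>I. f ` A i) \<subseteq> f ` (\<Inter>i\<in>I. A i)"
  proof
    fix y assume y: "y \<in> (\<Inter>i\<in>I. f ` A i)"
    define fibre where "fibre = {x \<in> topspace X. f x \<in> {y}}"
    obtain i0 where "i0 \<in> I" using assms(4) by blast
    then have "y \<in> f ` A i0" "A i0 \<subseteq> topspace X" using y closedin_subset[OF assms(6)] by blast+
    then have "y \<in> topspace Y" using assms(3) continuous_map_image_subset_topspace by blast
    then have "closedin X fibre"
      unfolding fibre_def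
      by (rule closedin_continuous_map_preimage[OF assms(3) closedin_t1_singleton[OF assms(2)]])
    then have "closedin X (A i \<inter> fibre)" if "i \<in> I" for i
      using assms(6)[OF that] by (intro closedin_Int)
    moreover have "A i \<inter> fibre \<noteq> {}" if i: "i \<in> I" for i
    proof -
      obtain x where "x \<in> A i" "f x = y" using y i by blast
      moreover have "x \<in> topspace X" using \<open>x \<in> A i\<close> closedin_subset[OF assms(6)[OF i]] by blast
      ultimately show ?thesis unfolding fibre_def by blast
    qed
    ultimately have "(\<Inter>i\<in>I. A i \<inter> fibre) \<noteq> {}"
      by (rule compact_space_Inter_down_directed_nonempty[OF assms(1,4) down_directed_Int_const[OF assms(5)]])
    then show "y \<in> f ` (\<Inter>i\<in>I. A i)"
      using assms(4) unfolding fibre_def by blast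
  qed
qed blast

lemma image_closure_of_compact_space:
  assumes "compact_space X" "kc_space Y" "continuous_map X Y f" "S \<subseteq> topspace X"
  shows "f ` (X closure_of S) = Y closure_of (f ` S)"
proof
  show "f ` (X closure_of S) \<subseteq> Y closure_of (f ` S)"
    using assms(3) by (rule continuous_map_image_closure_subset)
  have "closed_map X Y f"
    using assms(1-3) by (rule continuous_imp_closed_map_gen)
  then show "Y closure_of (f ` S) \<subseteq> f ` (X closure_of S)"
    using assms(4) by (simp add: closed_map_closure_of_image)
qed

lemma z_filter_subset_topspace: "z_filter \<Omega> \<F> \<Longrightarrow> F \<in> \<F> \<Longrightarrow> F \<subseteq> topspace \<Omega>"
  unfolding z_filter_def zero_set_def by blast

lemma z_filter_down_directed_closures:
  assumes "z_filter \<Omega> \<F>"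
  shows "down_directed \<F> (\<lambda>F. B closure_of (e ` F))"
  unfolding down_directed_def
proof (intro ballI)
  fix F G assume "F \<in> \<F>" "G \<in> \<F>"
  then have "F \<inter> G \<in> \<F>" using assms unfolding z_filter_def by blast
  moreover have "B closure_of (e ` (F \<inter> G)) \<subseteq> B closure_of (e ` F) \<inter> B closure_of (e ` G)"
    by (intro Int_greatest closure_of_mono image_mono) auto
  ultimately show "\<exists>H\<in>\<F>. B closure_of (e ` H) \<subseteq> B closure_of (e ` F) \<inter> B closure_of (e ` G)"
    by blast
qed

lemma image_Inter_closures_z_filter:
  assumes "compact_space B" "e \<in> topspace \<Omega> \<rightarrow> topspace B" "z_filter \<Omega> \<F>"
    and "kc_space Y" "continuous_map B Y g" "\<forall>x\<in>topspace \<Omega>. g (e x) = \<phi> x"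
  shows "g ` (\<Inter>F\<in>\<F>. B closure_of (e ` F)) = (\<Inter>F\<in>\<F>. g ` (B closure_of (e ` F)))"
    and "(\<Inter>F\<in>\<F>. g ` (B closure_of (e ` F))) = (\<Inter>F\<in>\<F>. Y closure_of (\<phi> ` F))"
proof -
  have "\<F> \<noteq> {}" using assms(3) by (simp add: z_filter_def)
  then show "g ` (\<Inter>F\<in>\<F>. B closure_of (e ` F)) = (\<Inter>F\<in>\<F>. g ` (B closure_of (e ` F)))"
    by (rule image_Inter_down_directed_closedin[OF assms(1) kc_imp_t1_space[OF assms(4)] assms(5)
        _ z_filter_down_directed_closures[OF assms(3)] closedin_closure_of])
  have "g ` (B closure_of (e ` F)) = Y closure_of (\<phi> ` F)" if "F \<in> \<F>" for F
  proof -
    have "F \<subseteq> topspace \<Omega>" using z_filter_subset_topspace assms(3) that .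
    then have "g ` e ` F = \<phi> ` F" using assms(6) by (force simp: image_image)
    moreover have "e ` F \<subseteq> topspace B" using \<open>F \<subseteq> topspace \<Omega>\<close> assms(2) by blast
    ultimately show ?thesis
      using image_closure_of_compact_space[OF assms(1,4,5)] by simp
  qed
  then show "(\<Inter>F\<in>\<F>. g ` (B closure_of (e ` F))) = (\<Inter>F\<in>\<F>. Y closure_of (\<phi> ` F))"
    by simp
qed

lemma openin_riemann_sphere: "openin riemann_sphere U \<longleftrightarrow> riemann_open U"
  by (simp add: riemann_sphere_def istopology_riemann_open)

lemma riemann_open_image_Some: "open U \<Longrightarrow> riemann_open (Some ` U)"
  by (simp add: riemann_open_def inj_vimage_image_eq)

lemma riemann_sphere_separate_infinity:
  "\<exists>U V. riemann_open U \<and> riemann_open V \<and> Some a \<in> U \<and> None \<in> V \<and> disjnt U V"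
proof (intro exI conjI)
  show "riemann_open (Some ` ball a 1)" by (simp add: riemann_open_image_Some)
  have "Some -` (- Some ` cball a 1) = - cball a 1" by auto
  then show "riemann_open (- Some ` cball a 1)"
    by (simp add: riemann_open_def open_Compl)
qed (auto simp: disjnt_def)

lemma Hausdorff_space_riemann_sphere: "Hausdorff_space riemann_sphere"
  unfolding Hausdorff_space_def openin_riemann_sphere
proof (intro allI impI)
  fix x y :: "complex option"
  assume "x \<in> topspace riemann_sphere \<and> y \<in> topspace riemann_sphere \<and> x \<noteq> y"
  then have "x \<noteq> y" by blast
  then consider a where "x = Some a" "y = None" | b where "x = None" "y = Some b"
    | a b where "x = Some a" "y = Some b" "a \<noteq> b"
    by (cases x; cases y) auto
  then show "\<exists>U V. riemann_open U \<and> riemann_open V \<and> x \<in> U \<and> y \<in> V \<and> disjnt U V"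
  proof cases
    case 1
    then show ?thesis using riemann_sphere_separate_infinity by blast
  next
    case 2
    then show ?thesis using riemann_sphere_separate_infinity disjnt_sym by metis
  next
    case 3
    then obtain U V where "open U" "open V" "a \<in> U" "b \<in> V" "U \<inter> V = {}"
      using hausdorff by metis
    then show ?thesis
      using 3 by (intro exI[of _ "Some ` U"] exI[of _ "Some ` V"])
        (auto simp: riemann_open_image_Some disjnt_def)
  qed
qed

theorem lemma2p12:
  fixes \<Omega> :: "'a topology" and B :: "'b topology" and e :: "'a \<Rightarrow> 'b"
    and \<F> :: "'a set set"
  assumes "completely_regular_space \<Omega>" and "Hausdorff_space \<Omega>"
    and "stone_cech \<Omega> B e"
    and "z_filter \<Omega> \<F>"
  shows
   "(\<forall>(\<phi> :: 'a \<Rightarrow> complex) \<phi>b.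
       continuous_map \<Omega> euclidean \<phi> \<and> continuous_map B riemann_sphere \<phi>b \<and>
       (\<forall>x\<in>topspace \<Omega>. \<phi>b (e x) = Some (\<phi> x)) \<longrightarrow>
       \<phi>b ` (\<Inter>F\<in>\<F>. B closure_of (e ` F)) = (\<Inter>F\<in>\<F>. \<phi>b ` (B closure_of (e ` F))) \<and>
       (\<Inter>F\<in>\<F>. \<phi>b ` (B closure_of (e ` F))) = (\<Inter>F\<in>\<F>. riemann_sphere closure_of (Some ` \<phi> ` F)))
    \<and>
    (\<forall>(X :: 'x::real_vector topology) \<phi> \<phi>b.
       lctvs X \<and> continuous_map \<Omega> X \<phi> \<and> compactin X (X closure_of (\<phi> ` topspace \<Omega>)) \<and>
       continuous_map B X \<phi>b \<and> (\<forall>x\<in>topspace \<Omega>. \<phi>b (e x) = \<phi> x) \<longrightarrow>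
       \<phi>b ` (\<Inter>F\<in>\<F>. B closure_of (e ` F)) = (\<Inter>F\<in>\<F>. \<phi>b ` (B closure_of (e ` F))) \<and>
       (\<Inter>F\<in>\<F>. \<phi>b ` (B closure_of (e ` F))) = (\<Inter>F\<in>\<F>. X closure_of (\<phi> ` F)))"
proof -
  have "continuous_map \<Omega> B e"
    using assms(3) unfolding stone_cech_def embedding_map_def
    by (meson homeomorphic_imp_continuous_map continuous_map_in_subtopology)
  then have B: "compact_space B" "e \<in> topspace \<Omega> \<rightarrow> topspace B"
    using assms(3) continuous_map_funspace unfolding stone_cech_def by blast+
  note main = image_Inter_closures_z_filter[OF B assms(4) Hausdorff_imp_kc_space]
  show ?thesis
  proof (rule conjI; intro allI impI)
    fix \<phi> :: "'a \<Rightarrow> complex" and \<phi>b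
    assume "continuous_map \<Omega> euclidean \<phi> \<and> continuous_map B riemann_sphere \<phi>b \<and>
      (\<forall>x\<in>topspace \<Omega>. \<phi>b (e x) = Some (\<phi> x))"
    then show "\<phi>b ` (\<Inter>F\<in>\<F>. B closure_of (e ` F)) = (\<Inter>F\<in>\<F>. \<phi>b ` (B closure_of (e ` F))) \<and>
       (\<Inter>F\<in>\<F>. \<phi>b ` (B closure_of (e ` F))) = (\<Inter>F\<in>\<F>. riemann_sphere closure_of (Some ` \<phi> ` F))"
      using main[OF Hausdorff_space_riemann_sphere, of \<phi>b "\<lambda>x. Some (\<phi> x)"]
      by (simp add: image_image)
  next
    fix X :: "'x topology" and \<phi> \<phi>b
    assume "lctvs X \<and> continuous_map \<Omega> X \<phi> \<and> compactin X (X closure_of (\<phi> ` topspace \<Omega>)) \<and>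
       continuous_map B X \<phi>b \<and> (\<forall>x\<in>topspace \<Omega>. \<phi>b (e x) = \<phi> x)"
    then show "\<phi>b ` (\<Inter>F\<in>\<F>. B closure_of (e ` F)) = (\<Inter>F\<in>\<F>. \<phi>b ` (B closure_of (e ` F))) \<and>
       (\<Inter>F\<in>\<F>. \<phi>b ` (B closure_of (e ` F))) = (\<Inter>F\<in>\<F>. X closure_of (\<phi> ` F))"
      using main[of X \<phi>b \<phi>] by (simp add: lctvs_def)
  qed
qed

end
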